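(* Let $p$ be a prime and $m,n\in\mathbb{Z}$. Then ($n=m^2$, $p\nmid m$ and $p\nmid n$) if and only if $p\nmid m$, $p\nmid n$, and there exists $a\in\{\pm p^h: h\geq 1\}$ such that $m\mid a^2-1$, $n\mid a^2-1$ and $(a^8-m)\mid(a^{16}-n)$. Consequently, the collection of sets $\{(n,n^2): n\in\mathbb{Z},\ p\nmid n\}$, $p$ prime, is uniformly positive existentially definable in the class $\mathcal{D}=\{\mathfrak{D}_p: p\text{ prime}\}$ over the language $\{0,1,+,\mid,R,T\}$.
   Context: Divisibility $\mid$ is ordinary divisibility in $\mathbb{Z}$. For a prime $p$, $x\mid_p y$ means $y=\pm xp^s$ for some $s\in\mathbb{Z}$. $\mathfrak{D}_p=(\mathbb{Z};0,1,+,\mid,\mid_p,\mathbb{Z}\smallsetminus\{-1,0,1\})$, with $R$ interpreted as $\mid_p$ and $T$ as $\mathbb{Z}\smallsetminus\{-1,0,1\}$. Uniformly positive existentially definable means a single positive existential formula of the language defines the corresponding set in every $\mathfrak{D}_p$. *)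

theory Defs
  imports Complex_Main "HOL-Computational_Algebra.Primes"
begin

definition pdvd :: "int \<Rightarrow> int \<Rightarrow> int \<Rightarrow> bool" where
  "pdvd p x y \<longleftrightarrow> (\<exists>s::int. real_of_int y = real_of_int x * real_of_int p powi s
                               \<or> real_of_int y = - (real_of_int x * real_of_int p powi s))"

datatype tm = Var nat | Zero | One | Plus tm tm

datatype pefm = Eq tm tm | Dvd tm tm | Rel tm tm | Tpred tm
  | Conj pefm pefm | Disj pefm pefm | Ex nat pefm

primrec tval :: "(nat \<Rightarrow> int) \<Rightarrow> tm \<Rightarrow> int" where
  "tval e (Var i) = e i"
| "tval e Zero = 0"
| "tval e One = 1"
| "tval e (Plus s t) = tval e s + tval e t"

text \<open>Satisfaction in D_p: R is |_p, T is Z minus {-1,0,1}.\<close>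
primrec sat :: "int \<Rightarrow> (nat \<Rightarrow> int) \<Rightarrow> pefm \<Rightarrow> bool" where
  "sat p e (Eq s t) = (tval e s = tval e t)"
| "sat p e (Dvd s t) = (tval e s dvd tval e t)"
| "sat p e (Rel s t) = pdvd p (tval e s) (tval e t)"
| "sat p e (Tpred t) = (tval e t \<notin> {-1, 0, 1})"
| "sat p e (Conj f g) = (sat p e f \<and> sat p e g)"
| "sat p e (Disj f g) = (sat p e f \<or> sat p e g)"
| "sat p e (Ex i f) = (\<exists>v. sat p (e(i := v)) f)"

text \<open>A family of binary relations S p (p prime) is uniformly positive existentially
  definable: one formula with free variables among 0,1 defines S p in every D_p.\<close>
definition unif_pe_definable2 :: "(int \<Rightarrow> (int \<times> int) set) \<Rightarrow> bool" where
  "unif_pe_definable2 S \<longleftrightarrow> (\<exists>\<phi>. \<forall>p. prime p \<longrightarrow>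
      (\<forall>e. sat p e \<phi> \<longleftrightarrow> (e 0, e 1) \<in> S p))"

end

theory Submission
  imports Defs "HOL-Number_Theory.Number_Theory"
begin

text \<open>If \<open>n = m^2\<close> with \<open>p \<nmid> m\<close>, Euler's theorem gives a power \<open>a = p^t\<close> with
  \<open>m^2 | a - 1\<close>, and \<open>a^8 - m\<close> divides \<open>a^16 - m^2\<close>. Conversely, \<open>m\<close> and \<open>n\<close> divide
  \<open>a^2 - 1\<close> and so are small compared with \<open>a^8\<close>, while \<open>a^8 - m\<close> divides the difference
  \<open>m^2 - n\<close> of \<open>a^16 - n\<close> and \<open>a^16 - m^2\<close>; this forces \<open>n = m^2\<close>, and \<open>m | a^2 - 1\<close>
  forces \<open>p \<nmid> m\<close>.

  For definability, \<open>1 |\<^sub>p a\<close> with \<open>a \<notin> {-1,0,1}\<close> says \<open>a = \<plusminus>p^h\<close>, \<open>h \<ge> 1\<close>, and for such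
  \<open>a\<close> the relation \<open>c = a^2\<close> is expressed by \<open>a | c\<close>, \<open>1 |\<^sub>p c\<close>, \<open>a - 1 |\<^sub>p c - a\<close> and
  \<open>a + 1 |\<^sub>p c + a\<close>: writing \<open>c = a x\<close>, these leave only \<open>x = a\<close>. Squaring four times
  yields \<open>a^2, a^4, a^8, a^16\<close>.\<close>

abbreviation signed_powers :: "int \<Rightarrow> int set" where
  "signed_powers p \<equiv> {x. \<exists>h::nat. h \<ge> 1 \<and> (x = p^h \<or> x = - (p^h))}"

lemma prime_power_cong_one:
  fixes p m :: int
  assumes "prime p" "\<not> p dvd m"
  obtains t :: nat where "t \<ge> 1" "m dvd p^t - 1"
proof -
  have "m \<noteq> 0" "p > 0"
    using assms prime_gt_0_int by auto
  moreover have "coprime (nat p) (nat \<bar>m\<bar>)"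
    using assms \<open>p > 0\<close> by (simp add: prime_imp_coprime flip: coprime_int_iff)
  then have "[int (nat p ^ totient (nat \<bar>m\<bar>)) = int 1] (mod int (nat \<bar>m\<bar>))"
    using euler_theorem cong_int_iff by blast
  ultimately have "[p ^ totient (nat \<bar>m\<bar>) = 1] (mod m)"
    by simp
  moreover have "totient (nat \<bar>m\<bar>) \<ge> 1"
    using \<open>m \<noteq> 0\<close> by (simp add: Suc_le_eq)
  ultimately show ?thesis
    using that by (simp add: cong_iff_dvd_diff dvd_diff_commute)
qed

lemma dvd_square_diff_imp_eq_square:
  fixes E K m n :: int
  assumes "\<bar>m\<bar> \<le> K" "\<bar>n\<bar> \<le> K" "K^2 + 2*K < \<bar>E\<bar>" "(E - m) dvd (E^2 - n)"
  shows "n = m^2"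
proof (rule ccontr)
  assume "n \<noteq> m^2"
  have "(E - m) dvd (E^2 - m^2)"
    by (simp add: power2_eq_square square_diff_square_factored)
  with assms(4) have "(E - m) dvd (E^2 - n) - (E^2 - m^2)"
    by (rule dvd_diff)
  then have "(E - m) dvd (m^2 - n)"
    by simp
  with \<open>n \<noteq> m^2\<close> have "\<bar>E - m\<bar> \<le> \<bar>m^2 - n\<bar>"
    by (simp add: dvd_imp_le_int)
  moreover have "m^2 \<le> K^2"
    using assms(1) abs_le_square_iff[of m K] by (simp add: power2_abs)
  then have "\<bar>m^2 - n\<bar> \<le> K^2 + K"
    using abs_triangle_ineq4[of "m^2" n] assms(2) by simp
  moreover have "\<bar>E\<bar> - K \<le> \<bar>E - m\<bar>"
    using abs_triangle_ineq2[of E m] assms(1) by linarith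
  ultimately show False
    using assms(3) by linarith
qed

lemma eq_square_if_dvd_power_conditions:
  fixes a m n :: int
  assumes "2 \<le> \<bar>a\<bar>" "m dvd a^2 - 1" "n dvd a^2 - 1" "(a^8 - m) dvd (a^16 - n)"
  shows "n = m^2"
proof (rule dvd_square_diff_imp_eq_square)
  define A where "A = a^2"
  have "2 * 2 \<le> \<bar>a\<bar> * \<bar>a\<bar>"
    using assms(1) by (intro mult_mono) auto
  then have A: "4 \<le> A"
    by (simp add: A_def power2_eq_square abs_mult[symmetric])
  then show "\<bar>m\<bar> \<le> a^2 - 1" "\<bar>n\<bar> \<le> a^2 - 1"
    using assms(2,3) A dvd_imp_le_int[of "a^2 - 1" m] dvd_imp_le_int[of "a^2 - 1" n]
    by (auto simp: A_def)
  have "1 \<le> A^2"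
    using A by (simp add: one_le_power)
  then have "A^2 - 1 < A^2 * A^2"
    using mult_left_mono[of 1 "A^2" "A^2"] by simp
  moreover have "A^2 * A^2 = \<bar>a^8\<bar>"
    by (simp add: A_def flip: power_add power_mult)
  moreover have "(a^2 - 1)^2 + 2 * (a^2 - 1) = A^2 - 1"
    by (simp add: A_def power2_eq_square algebra_simps)
  ultimately show "(a^2 - 1)^2 + 2 * (a^2 - 1) < \<bar>a^8\<bar>"
    by simp
  show "(a^8 - m) dvd ((a^8)^2 - n)"
    using assms(4) by (simp flip: power_mult)
qed

lemma signed_powersD:
  assumes "prime p" "a \<in> signed_powers p"
  shows "p dvd a" "2 \<le> \<bar>a\<bar>"
proof -
  obtain h :: nat where "h \<ge> 1" and "a = p^h \<or> a = - (p^h)"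
    using assms(2) by blast
  then have a: "\<bar>a\<bar> = p^h"
    using prime_gt_0_int[OF assms(1)] by auto
  moreover have "p dvd p^h"
    using \<open>h \<ge> 1\<close> by (simp add: dvd_power)
  ultimately show "p dvd a"
    by (metis dvd_abs_iff)
  have "p^1 \<le> p^h"
    using \<open>h \<ge> 1\<close> prime_ge_2_int[OF assms(1)] by (intro power_increasing) auto
  then show "2 \<le> \<bar>a\<bar>"
    using a prime_ge_2_int[OF assms(1)] by simp
qed

lemma power2_in_signed_powers:
  assumes "a \<in> signed_powers p"
  shows "a^2 \<in> signed_powers p"
proof -
  obtain h :: nat where "h \<ge> 1" "a = p^h \<or> a = - (p^h)"
    using assms by blast
  then have "a^2 = (p^h)^2"
    by auto
  then have "a^2 = p^(h * 2)"
    by (simp add: power_mult)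
  with \<open>h \<ge> 1\<close> show ?thesis
    by (intro CollectI exI[of _ "h * 2"]) simp
qed

lemma not_dvd_if_dvd_square_minus_one:
  fixes p a m :: int
  assumes "\<not> is_unit p" "p dvd a" "m dvd a^2 - 1"
  shows "\<not> p dvd m"
proof
  assume "p dvd m"
  have "p dvd a^2"
    using assms(2) by (simp add: power2_eq_square)
  moreover have "p dvd a^2 - 1"
    using \<open>p dvd m\<close> assms(3) by (rule dvd_trans)
  ultimately have "p dvd a^2 - (a^2 - 1)"
    by (rule dvd_diff)
  with assms(1) show False
    by simp
qed

lemma signed_power_witness_iff_square:
  fixes p m n :: int
  assumes "prime p"
  shows "(\<exists>a \<in> signed_powers p. m dvd a^2 - 1 \<and> n dvd a^2 - 1 \<and> (a^8 - m) dvd (a^16 - n))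
    \<longleftrightarrow> n = m^2 \<and> \<not> p dvd m"
proof
  assume "\<exists>a \<in> signed_powers p. m dvd a^2 - 1 \<and> n dvd a^2 - 1 \<and> (a^8 - m) dvd (a^16 - n)"
  then obtain a where a: "a \<in> signed_powers p" and "m dvd a^2 - 1" "n dvd a^2 - 1"
    "(a^8 - m) dvd (a^16 - n)"
    by blast
  moreover have "\<not> is_unit p"
    using assms not_prime_unit by blast
  ultimately show "n = m^2 \<and> \<not> p dvd m"
    using signed_powersD[OF assms a] eq_square_if_dvd_power_conditions
      not_dvd_if_dvd_square_minus_one by blast
next
  assume "n = m^2 \<and> \<not> p dvd m"
  then have n: "n = m^2" and "\<not> p dvd m"
    by auto
  then have "\<not> p dvd m^2"
    using assms prime_dvd_power by blast
  then obtain t :: nat where "t \<ge> 1" and "m^2 dvd p^t - 1"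
    using prime_power_cong_one[OF assms] by blast
  define a where "a = p^t"
  have "a \<in> signed_powers p"
    using \<open>t \<ge> 1\<close> by (auto simp: a_def)
  moreover have "m^2 dvd (a - 1) * (a + 1)"
    using \<open>m^2 dvd p^t - 1\<close> by (simp add: a_def)
  then have "m^2 dvd a^2 - 1"
    by (simp add: power2_eq_square algebra_simps)
  moreover have "m dvd a^2 - 1"
    using \<open>m^2 dvd a^2 - 1\<close> by (rule dvd_trans[rotated]) (simp add: power2_eq_square)
  moreover have "a^16 - m^2 = (a^8 - m) * (a^8 + m)"
    by (simp add: power2_eq_square algebra_simps flip: power_add)
  then have "(a^8 - m) dvd (a^16 - m^2)"
    by simp
  ultimately show "\<exists>a \<in> signed_powers p. m dvd a^2 - 1 \<and> n dvd a^2 - 1 \<and> (a^8 - m) dvd (a^16 - n)"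
    using n by blast
qed

lemma pdvd_iff:
  fixes p x y :: int
  assumes "prime p" "\<not> p dvd x"
  shows "pdvd p x y \<longleftrightarrow> (\<exists>k::nat. y = x * p^k \<or> y = - (x * p^k))"
proof
  assume "pdvd p x y"
  then obtain s where s: "real_of_int y = real_of_int x * real_of_int p powi s
      \<or> real_of_int y = - (real_of_int x * real_of_int p powi s)"
    unfolding pdvd_def by blast
  show "\<exists>k::nat. y = x * p^k \<or> y = - (x * p^k)"
  proof (cases "s \<ge> 0")
    case True
    then obtain k :: nat where "s = int k"
      using nonneg_eq_int by blast
    with s have "real_of_int y = real_of_int (x * p^k) \<or> real_of_int y = real_of_int (- (x * p^k))"
      by simp
    then show ?thesis
      by (metis of_int_eq_iff)
  next
    case False
    define k where "k = nat (- s)"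
    with False have k: "s = - int k" "k \<ge> 1"
      by auto
    have "real_of_int p ^ k \<noteq> 0"
      using assms(1) by auto
    with s k have "real_of_int (y * p^k) = real_of_int x \<or> real_of_int (y * p^k) = real_of_int (- x)"
      by (auto simp: power_int_minus field_simps)
    then have "p^k dvd x"
      by (metis dvd_minus_iff dvd_triv_right of_int_eq_iff)
    moreover have "p dvd p^k"
      using k(2) by (simp add: dvd_power)
    ultimately show ?thesis
      using assms(2) dvd_trans by blast
  qed
next
  assume "\<exists>k::nat. y = x * p^k \<or> y = - (x * p^k)"
  then obtain k :: nat where "y = x * p^k \<or> y = - (x * p^k)"
    by blast
  then show "pdvd p x y"
    unfolding pdvd_def by (auto simp: power_int_of_nat intro!: exI[of _ "int k"])
qed

lemma pdvd_mult_signed_power: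
  assumes "a \<in> signed_powers p"
  shows "pdvd p x (x * a)"
proof -
  obtain h :: nat where "a = p^h \<or> a = - (p^h)"
    using assms by blast
  then have "x * a = x * p^h \<or> x * a = - (x * p^h)"
    by auto
  then have "real_of_int (x * a) = real_of_int x * real_of_int p powi int h
      \<or> real_of_int (x * a) = - (real_of_int x * real_of_int p powi int h)"
    by (elim disjE) (simp_all add: power_int_of_nat)
  then show ?thesis
    unfolding pdvd_def by blast
qed

lemma pdvd_one_iff_signed_powers:
  fixes p y :: int
  assumes "prime p"
  shows "pdvd p 1 y \<and> y \<notin> {-1, 0, 1} \<longleftrightarrow> y \<in> signed_powers p"
proof
  assume y: "pdvd p 1 y \<and> y \<notin> {-1, 0, 1}"
  have "\<not> p dvd 1"
    using assms not_prime_unit by blast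
  then obtain k :: nat where "y = p^k \<or> y = - (p^k)"
    using pdvd_iff[OF assms] y by auto
  moreover from this y have "k \<ge> 1"
    by (cases k) auto
  ultimately show "y \<in> signed_powers p"
    by blast
next
  assume y: "y \<in> signed_powers p"
  then show "pdvd p 1 y \<and> y \<notin> {-1, 0, 1}"
    using pdvd_mult_signed_power[OF y, of 1] signed_powersD(2)[OF assms y] by auto
qed

lemma dvd_prime_power_cases:
  fixes p y :: int
  assumes "prime p" "y dvd p^j"
  shows "p dvd y \<or> y = 1 \<or> y = -1"
proof -
  obtain i where "\<bar>y\<bar> = p^i"
    using divides_primepow[OF assms] by (metis normalize_int_def)
  show ?thesis
  proof (cases i)
    case 0
    with \<open>\<bar>y\<bar> = p^i\<close> have "\<bar>y\<bar> = 1"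
      by simp
    then show ?thesis
      by linarith
  next
    case (Suc k)
    then have "p dvd \<bar>y\<bar>"
      using \<open>\<bar>y\<bar> = p^i\<close> by simp
    then show ?thesis
      by simp
  qed
qed

definition pdvd_square :: "int \<Rightarrow> int \<Rightarrow> int \<Rightarrow> bool" where
  "pdvd_square p a c \<longleftrightarrow> a dvd c \<and> pdvd p 1 c \<and> pdvd p (a - 1) (c - a) \<and> pdvd p (a + 1) (c + a)"

lemma pdvd_shifted_cofactor:
  fixes p a x s :: int
  assumes "prime p" "p dvd a" "a \<noteq> 0" "s = 1 \<or> s = -1" "pdvd p (a + s) (a * x + s * a)"
  obtains t where "t \<noteq> 0" "p dvd t \<or> t = 1 \<or> t = -1"
    "x + s = (a + s) * t \<or> x + s = - ((a + s) * t)"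
proof -
  have "\<not> p dvd a + s"
  proof
    assume "p dvd a + s"
    then have "p dvd (a + s) - a"
      using assms(2) by (rule dvd_diff)
    with assms(1,4) show False
      using not_prime_unit by auto
  qed
  then obtain i :: nat where i: "a * (x + s) = (a + s) * p^i \<or> a * (x + s) = - ((a + s) * p^i)"
    using pdvd_iff[OF assms(1)] assms(5) by (auto simp: algebra_simps)
  then have "a dvd (a + s) * p^i"
    by (metis dvd_minus_iff dvd_triv_left)
  moreover have "coprime a (a + s)"
    using assms(4) by auto
  ultimately have "a dvd p^i"
    using coprime_dvd_mult_right_iff by blast
  then obtain t where t: "p^i = a * t"
    by blast
  show thesis
  proof
    show "t \<noteq> 0"
      using t assms(1) by auto
    show "p dvd t \<or> t = 1 \<or> t = -1"
      using dvd_prime_power_cases[OF assms(1), of t i] t by simp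
    have "a * (x + s) = a * ((a + s) * t) \<or> a * (x + s) = a * (- ((a + s) * t))"
      using i t by (simp add: algebra_simps)
    then show "x + s = (a + s) * t \<or> x + s = - ((a + s) * t)"
      using assms(3) mult_left_cancel by meson
  qed
qed

lemma eq_if_unit_shifted_cofactors:
  fixes p a x t r :: int
  assumes "\<not> is_unit p" "p dvd a"
    and "p dvd x \<or> x = 1 \<or> x = -1" "p dvd t \<or> t = 1 \<or> t = -1" "p dvd r \<or> r = 1 \<or> r = -1"
    and "t \<noteq> 0" "r \<noteq> 0"
    and "x - 1 = (a - 1) * t \<or> x - 1 = - ((a - 1) * t)"
    and "x + 1 = (a + 1) * r \<or> x + 1 = - ((a + 1) * r)"
  shows "x = a"
proof -
  have a: "a \<noteq> 1" "a \<noteq> -1"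
    using assms(1,2) by auto
  show ?thesis
  proof (cases "p dvd x")
    case True
    have "\<not> p dvd t"
    proof
      assume "p dvd t"
      with assms(8) have "p dvd x - 1"
        by auto
      with True have "p dvd x - (x - 1)"
        by (rule dvd_diff)
      with assms(1) show False
        by simp
    qed
    moreover have "\<not> p dvd r"
    proof
      assume "p dvd r"
      with assms(9) have "p dvd x + 1"
        by auto
      then have "p dvd (x + 1) - x"
        using True by (rule dvd_diff)
      with assms(1) show False
        by simp
    qed
    ultimately show ?thesis
      using assms(4,5,8,9) a by auto
  next
    case False
    then show ?thesis
      using assms(3,6-9) a by auto
  qed
qed

lemma pdvd_square_imp_eq:
  fixes p a c :: int
  assumes "prime p" "p dvd a" "a \<noteq> 0" "pdvd_square p a c"
  shows "c = a^2"
proof -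
  obtain x where c: "c = a * x"
    using assms(4) unfolding pdvd_square_def by blast
  have "\<not> p dvd 1"
    using assms(1) not_prime_unit by blast
  then obtain j :: nat where "c = p^j \<or> c = - (p^j)"
    using assms(4) pdvd_iff[OF assms(1)] unfolding pdvd_square_def by fastforce
  then have "x dvd p^j"
    using c by (metis dvd_minus_iff dvd_triv_right)
  then have x: "p dvd x \<or> x = 1 \<or> x = -1"
    by (rule dvd_prime_power_cases[OF assms(1)])
  obtain t where "t \<noteq> 0" "p dvd t \<or> t = 1 \<or> t = -1"
    "x - 1 = (a - 1) * t \<or> x - 1 = - ((a - 1) * t)"
    using pdvd_shifted_cofactor[OF assms(1-3), of "-1" x] assms(4) c
    unfolding pdvd_square_def by auto
  moreover obtain r where "r \<noteq> 0" "p dvd r \<or> r = 1 \<or> r = -1"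
    "x + 1 = (a + 1) * r \<or> x + 1 = - ((a + 1) * r)"
    using pdvd_shifted_cofactor[OF assms(1-3), of 1 x] assms(4) c
    unfolding pdvd_square_def by (auto simp: add.commute)
  ultimately have "x = a"
    using eq_if_unit_shifted_cofactors[OF _ assms(2) x] assms(1) not_prime_unit by blast
  then show ?thesis
    using c by (simp add: power2_eq_square)
qed

lemma pdvd_square_iff:
  assumes "prime p" "a \<in> signed_powers p"
  shows "pdvd_square p a c \<longleftrightarrow> c = a^2"
proof
  assume "pdvd_square p a c"
  moreover have "p dvd a" "a \<noteq> 0"
    using signed_powersD[OF assms] by auto
  ultimately show "c = a^2"
    using pdvd_square_imp_eq[OF assms(1)] by blast
next
  assume "c = a^2"
  moreover have "pdvd p 1 (1 * a^2)"
    using pdvd_mult_signed_power[OF power2_in_signed_powers[OF assms(2)]] .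
  moreover have "pdvd p (a - 1) ((a - 1) * a)" "pdvd p (a + 1) ((a + 1) * a)"
    using pdvd_mult_signed_power[OF assms(2)] by blast+
  ultimately show "pdvd_square p a c"
    unfolding pdvd_square_def by (simp add: power2_eq_square algebra_simps)
qed

lemma pdvd_square_chain_iff:
  assumes "prime p" "a \<in> signed_powers p"
  shows "pdvd_square p a b \<and> pdvd_square p b c \<and> pdvd_square p c d \<and> pdvd_square p d f
    \<longleftrightarrow> b = a^2 \<and> c = a^4 \<and> d = a^8 \<and> f = a^16"
proof -
  have a2: "a^2 \<in> signed_powers p"
    using power2_in_signed_powers[OF assms(2)] .
  have a4: "a^4 \<in> signed_powers p"
    using power2_in_signed_powers[OF a2] by (simp flip: power_mult)
  have a8: "a^8 \<in> signed_powers p"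
    using power2_in_signed_powers[OF a4] by (simp flip: power_mult)
  have "(a^2)^2 = a^4" "(a^4)^2 = a^8" "(a^8)^2 = a^16"
    by (simp_all flip: power_mult)
  then show ?thesis
    using pdvd_square_iff[OF assms] pdvd_square_iff[OF assms(1) a2]
      pdvd_square_iff[OF assms(1) a4] pdvd_square_iff[OF assms(1) a8] by auto
qed

fun tvars :: "tm \<Rightarrow> nat set" where
  "tvars (Var i) = {i}"
| "tvars Zero = {}"
| "tvars One = {}"
| "tvars (Plus s t) = tvars s \<union> tvars t"

lemma tval_fun_upd [simp]: "i \<notin> tvars t \<Longrightarrow> tval (e(i := v)) t = tval e t"
  by (induction t) auto

text \<open>The language has no subtraction: \<open>R (s - t) (s' - t')\<close> is expressed with the two
  differences held in the bound variables 7 and 8.\<close>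
definition diff_fm :: "(tm \<Rightarrow> tm \<Rightarrow> pefm) \<Rightarrow> tm \<Rightarrow> tm \<Rightarrow> tm \<Rightarrow> tm \<Rightarrow> pefm" where
  "diff_fm R s t s' t' = Ex 7 (Ex 8 (Conj (Conj (Eq (Plus (Var 7) t) s) (Eq (Plus (Var 8) t') s'))
     (R (Var 7) (Var 8))))"

lemma sat_diff_fm:
  assumes "7 \<notin> tvars s \<union> tvars t \<union> tvars s' \<union> tvars t'"
    and "8 \<notin> tvars s \<union> tvars t \<union> tvars s' \<union> tvars t'"
  shows "sat p e (diff_fm R s t s' t') \<longleftrightarrow>
    sat p (e(7 := tval e s - tval e t, 8 := tval e s' - tval e t')) (R (Var 7) (Var 8))"
  using assms by (auto simp: diff_fm_def simp flip: eq_diff_eq)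

definition pdvd_square_fm :: "nat \<Rightarrow> nat \<Rightarrow> pefm" where
  "pdvd_square_fm i j = Conj (Conj (Dvd (Var i) (Var j)) (Rel One (Var j)))
     (Conj (diff_fm Rel (Var i) One (Var j) (Var i)) (Rel (Plus (Var i) One) (Plus (Var j) (Var i))))"

lemma sat_pdvd_square_fm:
  assumes "i \<notin> {7, 8}" "j \<notin> {7, 8}"
  shows "sat p e (pdvd_square_fm i j) \<longleftrightarrow> pdvd_square p (e i) (e j)"
  using assms by (simp add: pdvd_square_fm_def pdvd_square_def sat_diff_fm)

text \<open>Variables 0 and 1 are free; 2 holds \<open>a\<close>, and 3 to 6 hold \<open>a^2, a^4, a^8, a^16\<close>.\<close>
definition square_pair_fm :: pefm where
  "square_pair_fm = Ex 2 (Ex 3 (Ex 4 (Ex 5 (Ex 6 (Conj (Conj (Rel One (Var 2)) (Tpred (Var 2)))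
     (Conj (Conj (pdvd_square_fm 2 3) (Conj (pdvd_square_fm 3 4)
                 (Conj (pdvd_square_fm 4 5) (pdvd_square_fm 5 6))))
       (Conj (diff_fm Dvd (Var 0) Zero (Var 3) One) (Conj (diff_fm Dvd (Var 1) Zero (Var 3) One)
             (diff_fm Dvd (Var 5) (Var 0) (Var 6) (Var 1))))))))))"

lemma sat_square_pair_fm:
  assumes "prime p"
  shows "sat p e square_pair_fm \<longleftrightarrow>
    (\<exists>a \<in> signed_powers p. e 0 dvd a^2 - 1 \<and> e 1 dvd a^2 - 1 \<and> (a^8 - e 0) dvd (a^16 - e 1))"
    (is "_ \<longleftrightarrow> (\<exists>a \<in> signed_powers p. ?witness a)")
proof -
  have "sat p e square_pair_fm \<longleftrightarrow> (\<exists>a b c d f. (pdvd p 1 a \<and> a \<notin> {-1, 0, 1}) \<and>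
      (pdvd_square p a b \<and> pdvd_square p b c \<and> pdvd_square p c d \<and> pdvd_square p d f) \<and>
      e 0 dvd b - 1 \<and> e 1 dvd b - 1 \<and> (d - e 0) dvd (f - e 1))"
    by (simp add: square_pair_fm_def sat_pdvd_square_fm sat_diff_fm)
  also have "\<dots> \<longleftrightarrow> (\<exists>a \<in> signed_powers p. \<exists>b c d f. (b = a^2 \<and> c = a^4 \<and> d = a^8 \<and> f = a^16) \<and>
      e 0 dvd b - 1 \<and> e 1 dvd b - 1 \<and> (d - e 0) dvd (f - e 1))"
    (is "(\<exists>a b c d f. ?base a \<and> ?chain a b c d f \<and> ?dvds b d f) \<longleftrightarrow> _")
  proof
    assume "\<exists>a b c d f. ?base a \<and> ?chain a b c d f \<and> ?dvds b d f"
    then obtain a b c d f where "?base a" "?chain a b c d f" "?dvds b d f"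
      by blast
    moreover from \<open>?base a\<close> have a: "a \<in> signed_powers p"
      using pdvd_one_iff_signed_powers[OF assms] by blast
    ultimately have "b = a^2 \<and> c = a^4 \<and> d = a^8 \<and> f = a^16"
      using pdvd_square_chain_iff[OF assms] by blast
    with a \<open>?dvds b d f\<close>
    show "\<exists>a \<in> signed_powers p. \<exists>b c d f. (b = a^2 \<and> c = a^4 \<and> d = a^8 \<and> f = a^16) \<and> ?dvds b d f"
      by blast
  next
    assume "\<exists>a \<in> signed_powers p. \<exists>b c d f. (b = a^2 \<and> c = a^4 \<and> d = a^8 \<and> f = a^16) \<and> ?dvds b d f"
    then obtain a b c d f where a: "a \<in> signed_powers p"
      and "b = a^2 \<and> c = a^4 \<and> d = a^8 \<and> f = a^16" "?dvds b d f"
      by blast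
    moreover have "?base a"
      using pdvd_one_iff_signed_powers[OF assms] a by blast
    ultimately show "\<exists>a b c d f. ?base a \<and> ?chain a b c d f \<and> ?dvds b d f"
      using pdvd_square_chain_iff[OF assms a] by blast
  qed
  also have "\<dots> \<longleftrightarrow> (\<exists>a \<in> signed_powers p. ?witness a)"
    by simp
  finally show ?thesis .
qed

theorem lemma4p11:
  shows "(\<forall>(p::int) (m::int) (n::int). prime p \<longrightarrow>
            ((n = m^2 \<and> \<not> p dvd m \<and> \<not> p dvd n) \<longleftrightarrow>
             (\<not> p dvd m \<and> \<not> p dvd n \<and>
              (\<exists>a \<in> {x. \<exists>h::nat. h \<ge> 1 \<and> (x = p^h \<or> x = - (p^h))}.
                  m dvd a^2 - 1 \<and> n dvd a^2 - 1 \<and> (a^8 - m) dvd (a^16 - n)))))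
        \<and> unif_pe_definable2 (\<lambda>p. {(n, n^2) | n. \<not> p dvd n})"
proof (intro conjI allI impI)
  fix p m n :: int
  assume "prime p"
  then show "(n = m^2 \<and> \<not> p dvd m \<and> \<not> p dvd n) \<longleftrightarrow> (\<not> p dvd m \<and> \<not> p dvd n \<and>
      (\<exists>a \<in> signed_powers p. m dvd a^2 - 1 \<and> n dvd a^2 - 1 \<and> (a^8 - m) dvd (a^16 - n)))"
    using signed_power_witness_iff_square prime_dvd_power by blast
next
  show "unif_pe_definable2 (\<lambda>p. {(n, n^2) | n. \<not> p dvd n})"
    unfolding unif_pe_definable2_def
    using sat_square_pair_fm signed_power_witness_iff_square by auto
qed

end
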